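(* Let $G$ be the directed graph with vertices $v_1,v_2,v_3,\dots$ and $w_2,w_3,\dots$ (all distinct), and edges $v_i\to v_{i+1}$ for $i\ge1$, $v_1\to w_2$, and $w_i\to w_{i+1}$ for $i\ge2$, with birthdates $t(v_i)=i$ and $t(w_i)=i$. (Writing $w_1=v_1$, $G$ consists of two infinite directed paths sharing only their initial vertex.) Then $(G,t)$ is an infinite biosphere, and $v_1$ does not belong to any maximal element of $\mathrm{IAP}\cap\mathrm{CONV}\cap\mathrm{CA}$ (i.e., there is no $S\in \mathrm{IAP}\cap\mathrm{CONV}\cap\mathrm{CA}$ with $v_1\in S$ such that no proper superset of $S$ lies in $\mathrm{IAP}\cap\mathrm{CONV}\cap\mathrm{CA}$).
   Context: An infinite biosphere is a directed graph $G$ together with a function $t$ assigning a real number $t(v)$ to each vertex, such that: (1) if $v$ is a parent of $w$ (edge from $v$ to $w$) then $t(v)<t(w)$; (2) for every $r\in\mathbb R$ at most finitely many vertices $v$ have $t(v)<r$; (3) every vertex has finitely many children; (4) $G$ is infinite. $v$ is an ancestor of $w$ (and $w$ a descendant of $v$) if there is a directed path $v=v_1,\dots,v_n=w$ with $n>1$. $\mathrm{IAP}$: sets $S$ of vertices such that no $v\in S$ has both infinitely many descendants in $S$ and infinitely many non-descendants in $S$. $\mathrm{CONV}$: sets $S$ such that every vertex having an ancestor in $S$ and a descendant in $S$ lies in $S$. $\mathrm{CA}$: sets $S$ for which there exists $v\in S$ such that every $w\in S$ with $w\neq v$ is a descendant of $v$. *)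

theory Defs
  imports Complex_Main
begin

text \<open>A directed graph is given by a vertex set Vs and an edge relation E
  (E v w means v is a parent of w); t is the birthdate function.\<close>

definition infinite_biosphere :: "'a set \<Rightarrow> ('a \<Rightarrow> 'a \<Rightarrow> bool) \<Rightarrow> ('a \<Rightarrow> real) \<Rightarrow> bool" where
  "infinite_biosphere Vs E t \<longleftrightarrow>
     (\<forall>v w. E v w \<longrightarrow> v \<in> Vs \<and> w \<in> Vs) \<and>
     (\<forall>v w. E v w \<longrightarrow> t v < t w) \<and>
     (\<forall>r::real. finite {v \<in> Vs. t v < r}) \<and>
     (\<forall>v \<in> Vs. finite {w. E v w}) \<and>
     infinite Vs"

definition ancestor :: "('a \<Rightarrow> 'a \<Rightarrow> bool) \<Rightarrow> 'a \<Rightarrow> 'a \<Rightarrow> bool" where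
  "ancestor E v w \<longleftrightarrow> (v, w) \<in> {(x, y). E x y}\<^sup>+"

definition descendants :: "('a \<Rightarrow> 'a \<Rightarrow> bool) \<Rightarrow> 'a \<Rightarrow> 'a set" where
  "descendants E v = {w. ancestor E v w}"

definition IAP :: "('a \<Rightarrow> 'a \<Rightarrow> bool) \<Rightarrow> 'a set \<Rightarrow> bool" where
  "IAP E S \<longleftrightarrow> \<not> (\<exists>v \<in> S. infinite (S \<inter> descendants E v) \<and> infinite (S - descendants E v))"

definition CONV :: "'a set \<Rightarrow> ('a \<Rightarrow> 'a \<Rightarrow> bool) \<Rightarrow> 'a set \<Rightarrow> bool" where
  "CONV Vs E S \<longleftrightarrow>
     (\<forall>u \<in> Vs. (\<exists>a \<in> S. ancestor E a u) \<and> (\<exists>d \<in> S. ancestor E u d) \<longrightarrow> u \<in> S)"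

definition CA :: "('a \<Rightarrow> 'a \<Rightarrow> bool) \<Rightarrow> 'a set \<Rightarrow> bool" where
  "CA E S \<longleftrightarrow> (\<exists>v \<in> S. \<forall>w \<in> S. w \<noteq> v \<longrightarrow> w \<in> descendants E v)"

definition IAP_CONV_CA :: "'a set \<Rightarrow> ('a \<Rightarrow> 'a \<Rightarrow> bool) \<Rightarrow> 'a set set" where
  "IAP_CONV_CA Vs E = {S. S \<subseteq> Vs \<and> IAP E S \<and> CONV Vs E S \<and> CA E S}"

definition maximal_in :: "'a set set \<Rightarrow> 'a set \<Rightarrow> bool" where
  "maximal_in F S \<longleftrightarrow> S \<in> F \<and> \<not> (\<exists>T \<in> F. S \<subset> T)"

datatype vert = V nat | W nat

definition exVs :: "vert set" where
  "exVs = {V i | i. i \<ge> 1} \<union> {W i | i. i \<ge> 2}"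

fun exE :: "vert \<Rightarrow> vert \<Rightarrow> bool" where
  "exE (V i) (V j) \<longleftrightarrow> i \<ge> 1 \<and> j = i + 1"
| "exE (V i) (W j) \<longleftrightarrow> i = 1 \<and> j = 2"
| "exE (W i) (W j) \<longleftrightarrow> i \<ge> 2 \<and> j = i + 1"
| "exE (W i) (V j) \<longleftrightarrow> False"

fun ext :: "vert \<Rightarrow> real" where
  "ext (V i) = real i"
| "ext (W i) = real i"

end

theory Submission
  imports Defs
begin

text \<open>Let \<open>S \<in> IAP \<inter> CONV \<inter> CA\<close> contain \<open>v\<^sub>1\<close>. If \<open>S\<close> met both branches infinitely
  often, convexity would put \<open>v\<^sub>2\<close> into \<open>S\<close>, and \<open>v\<^sub>2\<close> would have infinitely many descendants
  (on the \<open>v\<close>-branch) and infinitely many non-descendants (on the \<open>w\<close>-branch) in \<open>S\<close>. So \<open>S\<close>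
  meets some branch only finitely often, and adding the child of its last vertex on that branch
  keeps \<open>S\<close> in the family: the new vertex has no descendants in \<open>S\<close>, and its only parent lies
  in \<open>S\<close>, so convexity and the common ancestor survive.\<close>

lemma ancestor_trans: "ancestor E u v \<Longrightarrow> ancestor E v w \<Longrightarrow> ancestor E u w"
  unfolding ancestor_def by (rule trancl_trans)

lemma ancestor_if_edge: "E v w \<Longrightarrow> ancestor E v w"
  unfolding ancestor_def by auto

lemma ancestor_birthdate_less:
  fixes t :: "'a \<Rightarrow> 'b::preorder"
  assumes "\<And>v w. E v w \<Longrightarrow> t v < t w" and "ancestor E v w"
  shows "t v < t w"
  using assms(2) unfolding ancestor_def
proof (induction rule: trancl_induct)
  case (base w)
  then show ?case using assms(1) by simp
next
  case (step y z)
  then have "t y < t z" using assms(1) by simp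
  with step.IH show ?case by (rule less_trans)
qed

lemma ancestor_chain:
  assumes "\<And>k. i \<le> k \<Longrightarrow> E (f k) (f (Suc k))" and "i < j"
  shows "ancestor E (f i) (f j)"
  using assms(2)
proof (induction j)
  case 0
  then show ?case by simp
next
  case (Suc j)
  then have edge: "ancestor E (f j) (f (Suc j))"
    using assms(1) by (simp add: ancestor_if_edge)
  show ?case
  proof (cases "i = j")
    case True
    then show ?thesis using edge by simp
  next
    case False
    then show ?thesis using Suc edge by (auto intro: ancestor_trans)
  qed
qed

lemma ancestor_of_only_parent:
  assumes "E p x" and "\<And>q. E q x \<Longrightarrow> q = p" and "ancestor E u x"
  shows "u = p \<or> ancestor E u p"
  using assms(3) unfolding ancestor_def by (auto elim: tranclE dest: assms(2))

lemma IAP_insert: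
  assumes "IAP E S" and "finite (S \<inter> descendants E x)"
  shows "IAP E (insert x S)"
proof -
  have "finite (insert x S \<inter> A) \<longleftrightarrow> finite (S \<inter> A)"
    and "finite (insert x S - A) \<longleftrightarrow> finite (S - A)" for A
    by (simp_all add: Int_insert_left insert_Diff_if)
  then show ?thesis using assms unfolding IAP_def by auto
qed

lemma CONV_insert_child:
  assumes conv: "CONV Vs E S" and "p \<in> S" and "E p x" and "\<And>q. E q x \<Longrightarrow> q = p"
    and no_desc: "S \<inter> descendants E x = {}" and acyclic: "\<not> ancestor E x x"
  shows "CONV Vs E (insert x S)"
  unfolding CONV_def
proof (intro ballI impI)
  have between: "u \<in> S" if "u \<in> Vs" "a \<in> S" "ancestor E a u" "d \<in> S" "ancestor E u d" for u a d
    using conv that unfolding CONV_def by blast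
  fix u
  assume "u \<in> Vs" and "(\<exists>a\<in>insert x S. ancestor E a u) \<and> (\<exists>d\<in>insert x S. ancestor E u d)"
  then obtain a d where a: "a \<in> insert x S" "ancestor E a u"
    and d: "d \<in> insert x S" "ancestor E u d" by blast
  have "a \<noteq> x"
  proof
    assume "a = x"
    then have "ancestor E x d" using ancestor_trans[OF a(2) d(2)] by simp
    then show False using d(1) no_desc acyclic unfolding descendants_def by blast
  qed
  with a have "a \<in> S" by simp
  show "u \<in> insert x S"
  proof (cases "d = x")
    case True
    with d(2) have "ancestor E u x" by simp
    with assms(3,4) have "u = p \<or> ancestor E u p" by (rule ancestor_of_only_parent)
    then show ?thesis using between[OF \<open>u \<in> Vs\<close> \<open>a \<in> S\<close> a(2) \<open>p \<in> S\<close>] \<open>p \<in> S\<close> by blast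
  next
    case False
    with d have "d \<in> S" by simp
    then show ?thesis using between[OF \<open>u \<in> Vs\<close> \<open>a \<in> S\<close> a(2)] d(2) by blast
  qed
qed

lemma CA_insert_child:
  assumes "CA E S" and "p \<in> S" and "E p x"
  shows "CA E (insert x S)"
proof -
  obtain r where r: "r \<in> S" "\<And>w. w \<in> S \<Longrightarrow> w \<noteq> r \<Longrightarrow> ancestor E r w"
    using assms(1) by (auto simp: CA_def descendants_def)
  have "ancestor E r x"
    using r assms(2,3) by (cases "p = r") (auto intro: ancestor_trans ancestor_if_edge)
  then show ?thesis using r unfolding CA_def descendants_def by blast
qed

lemma insert_child_in_IAP_CONV_CA:
  assumes bio: "infinite_biosphere Vs E t" and S: "S \<in> IAP_CONV_CA Vs E"
    and "p \<in> S" and "E p x" and only_parent: "\<And>q. E q x \<Longrightarrow> q = p"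
    and no_desc: "S \<inter> descendants E x = {}"
  shows "insert x S \<in> IAP_CONV_CA Vs E"
proof -
  have "x \<in> Vs" and birth: "\<And>v w. E v w \<Longrightarrow> t v < t w"
    using bio \<open>E p x\<close> unfolding infinite_biosphere_def by blast+
  have acyclic: "\<not> ancestor E x x"
    using ancestor_birthdate_less[of E t x x, OF birth] by blast
  have "IAP E S" "CONV Vs E S" "CA E S"
    using S by (simp_all add: IAP_CONV_CA_def)
  have "IAP E (insert x S)"
    using \<open>IAP E S\<close> no_desc by (simp add: IAP_insert)
  moreover have "CONV Vs E (insert x S)"
    using \<open>CONV Vs E S\<close> \<open>p \<in> S\<close> \<open>E p x\<close> only_parent no_desc acyclic
    by (rule CONV_insert_child)
  moreover have "CA E (insert x S)"
    using \<open>CA E S\<close> \<open>p \<in> S\<close> \<open>E p x\<close> by (rule CA_insert_child)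
  ultimately show ?thesis using S \<open>x \<in> Vs\<close> by (simp add: IAP_CONV_CA_def)
qed

lemma child_outside_of_finite_path_trace:
  fixes f :: "nat \<Rightarrow> 'a"
  assumes "f 1 \<in> S" and fin: "finite {k. 1 \<le> k \<and> f k \<in> S}"
    and path: "\<And>k. 1 \<le> k \<Longrightarrow> E (f k) (f (Suc k))"
    and desc: "\<And>k. 2 \<le> k \<Longrightarrow> descendants E (f k) \<subseteq> f ` {k<..}"
  shows "\<exists>p\<in>S. \<exists>x. E p x \<and> x \<notin> S \<and> S \<inter> descendants E x = {}"
proof -
  define a where "a = Max {k. 1 \<le> k \<and> f k \<in> S}"
  have a: "1 \<le> a" "f a \<in> S"
    using Max_in[OF fin] \<open>f 1 \<in> S\<close> unfolding a_def by auto
  have above_a: "f k \<notin> S" if "a < k" for k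
    using Max_ge[OF fin, of k] that a(1) unfolding a_def by auto
  have "S \<inter> descendants E (f (Suc a)) = {}"
    using desc[of "Suc a"] above_a a(1) by fastforce
  then show ?thesis using a path[of a] above_a[of "Suc a"] by auto
qed

definition wbranch :: "nat \<Rightarrow> vert" where
  "wbranch k = (if k = 1 then V 1 else W k)"

lemma inj_wbranch: "inj wbranch"
  by (auto simp: inj_def wbranch_def split: if_splits)

lemma exE_wbranch_step: "1 \<le> k \<Longrightarrow> exE (wbranch k) (wbranch (Suc k))"
  by (cases "k = 1") (simp_all add: wbranch_def)

lemma exE_ancestor_iff:
  "ancestor exE x y \<longleftrightarrow>
     (\<exists>i j. x = V i \<and> y = V j \<and> 1 \<le> i \<and> i < j) \<or> (\<exists>j. x = V 1 \<and> y = W j \<and> 2 \<le> j) \<or>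
     (\<exists>i j. x = W i \<and> y = W j \<and> 2 \<le> i \<and> i < j)"
  (is "_ \<longleftrightarrow> ?paths x y")
proof
  assume "ancestor exE x y"
  then show "?paths x y" unfolding ancestor_def
  proof (induction rule: trancl_induct)
    case (base y)
    then show ?case by (cases x; cases y) auto
  next
    case (step y z)
    then show ?case by (cases y; cases z) auto
  qed
next
  have V_path: "ancestor exE (V i) (V j)" if "1 \<le> i" "i < j" for i j
    using ancestor_chain[of i exE V j] that by simp
  have W_path: "ancestor exE (wbranch i) (wbranch j)" if "1 \<le> i" "i < j" for i j
    using ancestor_chain[of i exE wbranch j] exE_wbranch_step that by simp
  assume "?paths x y"
  then show "ancestor exE x y"
  proof (elim disjE exE conjE)
    fix i j
    assume "x = V i" "y = V j" "1 \<le> i" "i < j"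
    then show ?thesis using V_path by simp
  next
    fix j
    assume "x = V 1" "y = W j" "2 \<le> j"
    then show ?thesis using W_path[of 1 j] by (simp add: wbranch_def)
  next
    fix i j
    assume "x = W i" "y = W j" "2 \<le> i" "i < j"
    then show ?thesis using W_path[of i j] by (simp add: wbranch_def)
  qed
qed

lemma exE_parent_unique: "exE p x \<Longrightarrow> exE q x \<Longrightarrow> q = p"
  by (cases p; cases q; cases x) auto

lemma exE_descendants_V: "2 \<le> k \<Longrightarrow> descendants exE (V k) \<subseteq> V ` {k<..}"
  by (auto simp: descendants_def exE_ancestor_iff)

lemma exE_descendants_wbranch:
  "2 \<le> k \<Longrightarrow> descendants exE (wbranch k) \<subseteq> wbranch ` {k<..}"
  by (auto simp: descendants_def exE_ancestor_iff wbranch_def image_iff)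

lemma exE_infinite_biosphere: "infinite_biosphere exVs exE ext"
  unfolding infinite_biosphere_def
proof (intro conjI allI impI ballI)
  fix v w
  assume "exE v w"
  then show "v \<in> exVs" "w \<in> exVs" "ext v < ext w"
    unfolding exVs_def by (cases v; cases w; auto)+
next
  fix r :: real
  have "{v \<in> exVs. ext v < r} \<subseteq> V ` {..nat \<lceil>r\<rceil>} \<union> W ` {..nat \<lceil>r\<rceil>}"
  proof
    fix v
    assume "v \<in> {v \<in> exVs. ext v < r}"
    then show "v \<in> V ` {..nat \<lceil>r\<rceil>} \<union> W ` {..nat \<lceil>r\<rceil>}"
      by (cases v) (auto simp: image_iff, linarith+)
  qed
  then show "finite {v \<in> exVs. ext v < r}" by (rule finite_subset) auto
next
  fix v
  have "{w. exE v w} \<subseteq> (case v of V i \<Rightarrow> {V (Suc i), W 2} | W i \<Rightarrow> {W (Suc i)})"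
    by (cases v) (auto elim: exE.elims)
  then show "finite {w. exE v w}" by (rule finite_subset) (simp split: vert.split)
next
  have "V ` {1..} \<subseteq> exVs" unfolding exVs_def by auto
  moreover have "infinite (V ` {1::nat..})"
    using infinite_Ici[of "1::nat"] by (simp add: finite_image_iff inj_on_def)
  ultimately show "infinite exVs" using finite_subset by blast
qed

lemma IAP_CONV_CA_meets_a_branch_finitely:
  assumes S: "S \<in> IAP_CONV_CA exVs exE" and "V 1 \<in> S"
  shows "finite {k. 1 \<le> k \<and> V k \<in> S} \<or> finite {k. 1 \<le> k \<and> wbranch k \<in> S}"
proof (rule ccontr)
  let ?Vs = "{k. 1 \<le> k \<and> V k \<in> S}" and ?Ws = "{k. 1 \<le> k \<and> wbranch k \<in> S}"
  assume "\<not> ?thesis"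
  then have Vinf: "infinite ?Vs" and Winf: "infinite ?Ws" by auto
  have Vinf2: "infinite (?Vs - {..2})"
    using Vinf by (simp add: Diff_infinite_finite)
  then obtain i where "i \<in> ?Vs - {..2}"
    using infinite_imp_nonempty by blast
  then have "2 < i" "V i \<in> S" by auto
  moreover have "V 2 \<in> exVs" "ancestor exE (V 1) (V 2)" "ancestor exE (V 2) (V i)"
    using \<open>2 < i\<close> by (auto simp: exVs_def exE_ancestor_iff)
  ultimately have "V 2 \<in> S"
    using S \<open>V 1 \<in> S\<close> unfolding IAP_CONV_CA_def CONV_def by blast
  have "V ` (?Vs - {..2}) \<subseteq> S \<inter> descendants exE (V 2)"
    by (auto simp: descendants_def exE_ancestor_iff)
  moreover have "infinite (V ` (?Vs - {..2}))"
    using Vinf2 by (simp add: finite_image_iff inj_on_def)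
  ultimately have "infinite (S \<inter> descendants exE (V 2))"
    using finite_subset by blast
  have "wbranch ` (?Ws - {1}) \<subseteq> S - descendants exE (V 2)"
    by (auto simp: descendants_def exE_ancestor_iff wbranch_def)
  moreover have "infinite (wbranch ` (?Ws - {1}))"
    using Winf inj_wbranch by (simp add: finite_image_iff inj_on_subset)
  ultimately have "infinite (S - descendants exE (V 2))"
    using finite_subset by blast
  with \<open>infinite (S \<inter> descendants exE (V 2))\<close> show False
    using S \<open>V 2 \<in> S\<close> unfolding IAP_CONV_CA_def IAP_def by blast
qed

lemma IAP_CONV_CA_child_outside:
  assumes "S \<in> IAP_CONV_CA exVs exE" and "V 1 \<in> S"
  shows "\<exists>p\<in>S. \<exists>x. exE p x \<and> x \<notin> S \<and> S \<inter> descendants exE x = {}"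
  using IAP_CONV_CA_meets_a_branch_finitely[OF assms]
proof
  assume "finite {k. 1 \<le> k \<and> V k \<in> S}"
  then show ?thesis
    using child_outside_of_finite_path_trace[of V S] exE_descendants_V \<open>V 1 \<in> S\<close> by simp
next
  assume "finite {k. 1 \<le> k \<and> wbranch k \<in> S}"
  moreover have "wbranch 1 \<in> S" using \<open>V 1 \<in> S\<close> by (simp add: wbranch_def)
  ultimately show ?thesis
    using child_outside_of_finite_path_trace[of wbranch S] exE_wbranch_step exE_descendants_wbranch
    by blast
qed

lemma IAP_CONV_CA_extend:
  assumes S: "S \<in> IAP_CONV_CA exVs exE" and "V 1 \<in> S"
  shows "\<exists>T\<in>IAP_CONV_CA exVs exE. S \<subset> T"
proof -
  obtain p x where "p \<in> S" "exE p x" "x \<notin> S" "S \<inter> descendants exE x = {}"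
    using IAP_CONV_CA_child_outside[OF assms] by blast
  then have "insert x S \<in> IAP_CONV_CA exVs exE"
    using insert_child_in_IAP_CONV_CA[OF exE_infinite_biosphere S] exE_parent_unique by blast
  with \<open>x \<notin> S\<close> show ?thesis by blast
qed

theorem mainTheorem10:
  shows "infinite_biosphere exVs exE ext \<and>
         \<not> (\<exists>S. V 1 \<in> S \<and> maximal_in (IAP_CONV_CA exVs exE) S)"
  using exE_infinite_biosphere IAP_CONV_CA_extend unfolding maximal_in_def by blast

end
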